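(* Assume the setting below with general missingness: the $M_i(1),M_i(0)\in\{0,1\}$ are arbitrary constants whose values may depend on the potential outcomes in an arbitrary way. Fix $\boldsymbol\delta\in\mathbb R^n$ and a constant $b\in\mathbb R$, and define $\tilde{\boldsymbol Y}^{\texttt{g}}_{\boldsymbol Z,\boldsymbol\delta,b}(0)\in\overline{\mathbb R}^n$ by $$\tilde Y^{\texttt{g}}_{\boldsymbol Z,\boldsymbol\delta,b,i}(0)=\begin{cases}\min\{Y_i-\delta_i,b\},& Z_i=1,\ M_i=1,\\ -\infty,& Z_i=1,\ M_i=0,\\ Y_i,& Z_i=0,\ M_i=1,\\ b,& Z_i=0,\ M_i=0,\end{cases}\qquad 1\le i\le n.$$ Then $\tilde p^{\texttt{g}}_{\boldsymbol Z,\boldsymbol\delta,b}:=G_{\mathrm R,\phi}\big(t_{\mathrm R,\phi}(\boldsymbol Z,\tilde{\boldsymbol Y}^{\texttt{g}}_{\boldsymbol Z,\boldsymbol\delta,b}(0))\big)$ is a valid p-value for $H_{\boldsymbol\delta}:\boldsymbol\tau=\boldsymbol\delta$: if $H_{\boldsymbol\delta}$ holds then $\mathbb P(\tilde p^{\texttt{g}}_{\boldsymbol Z,\boldsymbol\delta,b}\le\alpha)\le\alpha$ for every $\alpha\in(0,1)$.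
   Context: There are $n$ units. Unit $i$ has fixed potential outcomes $Y_i^\star(0),Y_i^\star(1)\in\mathbb R$ and fixed potential missingness indicators $M_i(0),M_i(1)\in\{0,1\}$; $\tau_i=Y_i^\star(1)-Y_i^\star(0)$, $\boldsymbol\tau=(\tau_1,\dots,\tau_n)^\intercal$. The assignment $\boldsymbol Z\in\{0,1\}^n$ is drawn from a completely randomized experiment (CRE): for fixed positive integers $n_1,n_0$ with $n_1+n_0=n$, $\boldsymbol Z$ is uniform over vectors in $\{0,1\}^n$ with exactly $n_1$ ones, independently of all potential outcomes and missingness indicators; probabilities are over $\boldsymbol Z$. Observed missingness $M_i=Z_iM_i(1)+(1-Z_i)M_i(0)$; the realized outcome $Z_iY_i^\star(1)+(1-Z_i)Y_i^\star(0)$ is observed, and denoted $Y_i$, only when $M_i=1$. Test statistics: $\overline{\mathbb R}=\mathbb R\cup\{\pm\infty\}$; for $1\le i,j\le n$, $y,y'\in\overline{\mathbb R}$, $\psi_{i,j}(y,y')=\mathbf 1\{y>y'\}+\mathbf 1\{y=y'\}\mathbf 1\{i\ge j\}$; $\mathrm{rank}_i(\boldsymbol y)=\sum_{j=1}^n\psi_{i,j}(y_i,y_j)$. $\phi$ is a fixed nondecreasing real function on the nonnegative integers. $t_{\mathrm R,\phi}(\boldsymbol z,\boldsymbol y)$ is either $\sum_i z_i\phi(\mathrm{rank}_i(\boldsymbol y))$ (rank-sum) or $\sum_i z_i\phi\big(\sum_j(1-z_j)\psi_{i,j}(y_i,y_j)\big)$ (Mann–Whitney type); the result holds for either. $G_{\mathrm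 R,\phi}(c)=\mathbb P(t_{\mathrm R,\phi}(\boldsymbol A,\boldsymbol y_0)\ge c)$ with $\boldsymbol A$ from the CRE and $\boldsymbol y_0\in\mathbb R^n$ any fixed vector (independent of the choice of $\boldsymbol y_0$). *)

theory Defs
  imports "HOL-Probability.Probability"
begin

(* Units are indexed 0..n-1 (order-preserving relabelling of 1..n).
   An assignment Z is represented by the set of treated units. *)

definition cre :: "nat \<Rightarrow> nat \<Rightarrow> nat set set" where
  "cre n n1 = {Z. Z \<subseteq> {..<n} \<and> card Z = n1}"

definition cre_prob :: "nat \<Rightarrow> nat \<Rightarrow> (nat set \<Rightarrow> bool) \<Rightarrow> real" where
  "cre_prob n n1 P = measure_pmf.prob (pmf_of_set (cre n n1)) {Z. P Z}"

definition psi :: "nat \<Rightarrow> nat \<Rightarrow> ereal \<Rightarrow> ereal \<Rightarrow> nat" where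
  "psi i j y y' = (if y > y' then 1 else 0) + (if y = y' \<and> i \<ge> j then 1 else 0)"

definition rank :: "nat \<Rightarrow> (nat \<Rightarrow> ereal) \<Rightarrow> nat \<Rightarrow> nat" where
  "rank n y i = (\<Sum>j<n. psi i j (y i) (y j))"

datatype stat_kind = RankSum | MannWhitney

definition t_R :: "stat_kind \<Rightarrow> (nat \<Rightarrow> real) \<Rightarrow> nat \<Rightarrow> nat set \<Rightarrow> (nat \<Rightarrow> ereal) \<Rightarrow> real" where
  "t_R k phi n Z y =
     (case k of
        RankSum \<Rightarrow> (\<Sum>i\<in>Z \<inter> {..<n}. phi (rank n y i))
      | MannWhitney \<Rightarrow> (\<Sum>i\<in>Z \<inter> {..<n}. phi (\<Sum>j\<in>{..<n} - Z. psi i j (y i) (y j))))"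

(* G_{R,phi}(c) computed with a fixed real vector y0 *)
definition G_R :: "stat_kind \<Rightarrow> (nat \<Rightarrow> real) \<Rightarrow> nat \<Rightarrow> nat \<Rightarrow> (nat \<Rightarrow> real) \<Rightarrow> real \<Rightarrow> real" where
  "G_R k phi n n1 y0 c = cre_prob n n1 (\<lambda>A. t_R k phi n A (\<lambda>i. ereal (y0 i)) \<ge> c)"

(* imputed control vector \<tilde>Y^g_{Z,\<delta>,b}(0); observed M_i and Y_i are
   determined by Z and the potential quantities *)
definition Ytil_g :: "(nat \<Rightarrow> real) \<Rightarrow> (nat \<Rightarrow> real) \<Rightarrow> (nat \<Rightarrow> bool) \<Rightarrow> (nat \<Rightarrow> bool)
     \<Rightarrow> (nat \<Rightarrow> real) \<Rightarrow> real \<Rightarrow> nat set \<Rightarrow> nat \<Rightarrow> ereal" where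
  "Ytil_g Y1 Y0 M1 M0 \<delta> b Z i =
     (if i \<in> Z then (if M1 i then min (ereal (Y1 i - \<delta> i)) (ereal b) else -\<infinity>)
      else (if M0 i then ereal (Y0 i) else ereal b))"

end

theory Submission
  imports Defs
begin

(* Ranks break ties by unit index, so for every y the rank map is a bijection from the units onto
   {1..n}, and both statistics depend on y only through the set of treated ranks.  That set is
   uniform over the n1-subsets of {1..n} whatever y is, which is why G does not depend on y0.
   Under H_delta the imputed vector lies below the fixed vector w (control outcome, or b when it
   is missing) on the treated units and equals it on the controls.  Lowering treated values can
   only lower both statistics (for the rank sum: fewer treated ranks exceed each threshold, then
   sum by parts against the increments of phi).  So the imputed statistic is dominated by
   t(Z, w), whose survival function is G, and a p-value built from the survival function of a
   dominating statistic is valid. *)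

lemma card_filter_image: "inj_on f A \<Longrightarrow> card {x\<in>f ` A. P x} = card {a\<in>A. P (f a)}"
proof -
  assume "inj_on f A"
  then have "inj_on f {a\<in>A. P (f a)}" by (rule inj_on_subset) auto
  moreover have "{x\<in>f ` A. P x} = f ` {a\<in>A. P (f a)}" by auto
  ultimately show ?thesis by (simp add: card_image)
qed

lemma sum_le_sum_of_tail_counts:
  fixes phi :: "nat \<Rightarrow> 'b::linordered_idom" and a a' :: "'a \<Rightarrow> nat"
  assumes "mono phi" and "finite Z"
    and tails: "\<And>m. card {i\<in>Z. m < a' i} \<le> card {i\<in>Z. m < a i}"
  shows "(\<Sum>i\<in>Z. phi (a' i)) \<le> (\<Sum>i\<in>Z. phi (a i))"
proof -
  obtain N where N: "\<forall>r\<in>a ` Z \<union> a' ` Z. r \<le> N"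
    using \<open>finite Z\<close> finite_nat_set_iff_bounded_le by blast
  define D where "D m = phi (Suc m) - phi m" for m
  have expand: "(\<Sum>i\<in>Z. phi (c i))
      = of_nat (card Z) * phi 0 + (\<Sum>m<N. of_nat (card {i\<in>Z. m < c i}) * D m)"
    if bounded: "\<forall>i\<in>Z. c i \<le> N" for c
  proof -
    have "phi (c i) = phi 0 + (\<Sum>m<N. if m < c i then D m else 0)" if "i \<in> Z" for i
    proof -
      have "{m\<in>{..<N}. m < c i} = {..<c i}" using bounded that by auto
      then have "(\<Sum>m<N. if m < c i then D m else 0) = (\<Sum>m<c i. D m)"
        by (simp add: sum.inter_filter[symmetric])
      then show ?thesis by (simp add: D_def sum_lessThan_telescope)
    qed
    then have "(\<Sum>i\<in>Z. phi (c i)) = (\<Sum>i\<in>Z. phi 0 + (\<Sum>m<N. if m < c i then D m else 0))"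
      by (rule sum.cong[OF refl])
    also have "\<dots> = of_nat (card Z) * phi 0 + (\<Sum>m<N. \<Sum>i\<in>Z. if m < c i then D m else 0)"
      by (simp add: sum.distrib sum.swap[of _ Z])
    also have "\<dots> = of_nat (card Z) * phi 0 + (\<Sum>m<N. of_nat (card {i\<in>Z. m < c i}) * D m)"
      using \<open>finite Z\<close> by (simp add: sum.inter_filter[symmetric])
    finally show ?thesis .
  qed
  have "D m \<ge> 0" for m
    using monoD[OF \<open>mono phi\<close>, of m "Suc m"] by (simp add: D_def)
  then have "(\<Sum>m<N. of_nat (card {i\<in>Z. m < a' i}) * D m) \<le> (\<Sum>m<N. of_nat (card {i\<in>Z. m < a i}) * D m)"
    using tails by (intro sum_mono mult_right_mono) simp_all
  then show ?thesis using expand N by simp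
qed

lemma pvalue_of_dominated_statistic_valid:
  fixes p :: "'a pmf" and T W :: "'a \<Rightarrow> 'b::linorder"
  assumes "finite (set_pmf p)" and "0 \<le> \<alpha>"
    and dominated: "\<And>x. x \<in> set_pmf p \<Longrightarrow> T x \<le> W x"
  shows "measure_pmf.prob p {x. measure_pmf.prob p {y. T x \<le> W y} \<le> \<alpha>} \<le> \<alpha>"
proof -
  define S where "S = {x\<in>set_pmf p. measure_pmf.prob p {y. T x \<le> W y} \<le> \<alpha>}"
  have "{x. measure_pmf.prob p {y. T x \<le> W y} \<le> \<alpha>} \<inter> set_pmf p = S"
    by (auto simp: S_def)
  then have "measure_pmf.prob p {x. measure_pmf.prob p {y. T x \<le> W y} \<le> \<alpha>} = measure_pmf.prob p S"
    by (metis measure_Int_set_pmf)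
  also have "\<dots> \<le> \<alpha>"
  proof (cases "S = {}")
    case True
    then show ?thesis using \<open>0 \<le> \<alpha>\<close> by simp
  next
    case False
    have "finite S" using \<open>finite (set_pmf p)\<close> by (simp add: S_def)
    have "Min (T ` S) \<in> T ` S" using \<open>finite S\<close> False by simp
    then obtain x0 where x0: "x0 \<in> S" "T x0 = Min (T ` S)" by auto
    have "T x0 \<le> W y" if "y \<in> S" for y
    proof -
      have "T x0 \<le> T y" using x0(2) \<open>finite S\<close> that by simp
      also have "T y \<le> W y" using that dominated by (simp add: S_def)
      finally show ?thesis .
    qed
    then have "S \<subseteq> {y. T x0 \<le> W y}" by blast
    then have "measure_pmf.prob p S \<le> measure_pmf.prob p {y. T x0 \<le> W y}"
      by (rule measure_pmf.finite_measure_mono) simp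
    also have "\<dots> \<le> \<alpha>" using x0(1) by (simp add: S_def)
    finally show ?thesis .
  qed
  finally show ?thesis .
qed

definition tie_le :: "(nat \<Rightarrow> 'a::linorder) \<Rightarrow> nat \<Rightarrow> nat \<Rightarrow> bool" where
  "tie_le y j i \<longleftrightarrow> y j < y i \<or> (y j = y i \<and> j \<le> i)"

lemma tie_le_refl: "tie_le y i i"
  by (simp add: tie_le_def)

lemma tie_le_trans: "tie_le y i j \<Longrightarrow> tie_le y j l \<Longrightarrow> tie_le y i l"
  by (auto simp: tie_le_def)

lemma tie_le_antisym: "tie_le y i j \<Longrightarrow> tie_le y j i \<Longrightarrow> i = j"
  by (auto simp: tie_le_def)

lemma not_tie_le: "\<not> tie_le y j i \<Longrightarrow> tie_le y i j \<and> i \<noteq> j"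
  by (auto simp: tie_le_def)

lemma tie_le_lower_left:
  "tie_le y l j \<Longrightarrow> y' l \<le> y l \<Longrightarrow> y' j = y j \<Longrightarrow> tie_le y' l j"
  unfolding tie_le_def by (metis le_less_trans order.order_iff_strict)

lemma tie_le_raise_right:
  "tie_le y' j i \<Longrightarrow> y' i \<le> y i \<Longrightarrow> y' j = y j \<Longrightarrow> tie_le y j i"
  unfolding tie_le_def by (metis less_le_trans order.order_iff_strict)

lemma psi_eq_tie_le: "psi i j (y i) (y j) = (if tie_le y j i then 1 else 0)"
  by (auto simp: psi_def tie_le_def)

lemma sum_psi_eq_card:
  "finite A \<Longrightarrow> (\<Sum>j\<in>A. psi i j (y i) (y j)) = card {j\<in>A. tie_le y j i}"
  by (simp add: psi_eq_tie_le sum.inter_filter[symmetric])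

lemma rank_eq_card: "rank n y i = card {j\<in>{..<n}. tie_le y j i}"
  by (simp add: rank_def sum_psi_eq_card)

lemma rank_le_iff:
  assumes "i < n" "j < n"
  shows "rank n y j \<le> rank n y i \<longleftrightarrow> tie_le y j i"
proof
  assume "tie_le y j i"
  then have "{l\<in>{..<n}. tie_le y l j} \<subseteq> {l\<in>{..<n}. tie_le y l i}" by (auto intro: tie_le_trans)
  then show "rank n y j \<le> rank n y i" unfolding rank_eq_card by (intro card_mono) auto
next
  assume le: "rank n y j \<le> rank n y i"
  show "tie_le y j i"
  proof (rule ccontr)
    assume "\<not> tie_le y j i"
    then have "{l\<in>{..<n}. tie_le y l i} \<subset> {l\<in>{..<n}. tie_le y l j}"
      using assms(2) by (auto dest: not_tie_le intro: tie_le_trans tie_le_refl)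
    then have "rank n y i < rank n y j" unfolding rank_eq_card by (intro psubset_card_mono) auto
    with le show False by simp
  qed
qed

lemma bij_betw_rank: "bij_betw (rank n y) {..<n} {1..n}"
proof -
  have inj: "inj_on (rank n y) {..<n}"
    by (rule inj_onI) (metis lessThan_iff order.refl rank_le_iff tie_le_antisym)
  have "rank n y i \<in> {1..n}" if "i < n" for i
  proof -
    have "i \<in> {j\<in>{..<n}. tie_le y j i}" using that tie_le_refl by simp
    then have "0 < rank n y i" unfolding rank_eq_card by (auto simp: card_gt_0_iff)
    moreover have "rank n y i \<le> n"
      unfolding rank_eq_card using card_mono[of "{..<n}" "{j\<in>{..<n}. tie_le y j i}"] by auto
    ultimately show ?thesis by simp
  qed
  then have "rank n y ` {..<n} \<subseteq> {1..n}" by blast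
  moreover have "card (rank n y ` {..<n}) = card {1..n}" using card_image[OF inj] by simp
  ultimately have "rank n y ` {..<n} = {1..n}" by (simp add: card_subset_eq)
  with inj show ?thesis unfolding bij_betw_def by simp
qed

definition rank_set_stat :: "stat_kind \<Rightarrow> (nat \<Rightarrow> real) \<Rightarrow> nat \<Rightarrow> nat set \<Rightarrow> real" where
  "rank_set_stat k phi n R =
     (case k of
        RankSum \<Rightarrow> (\<Sum>r\<in>R. phi r)
      | MannWhitney \<Rightarrow> (\<Sum>r\<in>R. phi (card {s\<in>{1..n} - R. s \<le> r})))"

lemma sum_psi_controls_eq_card_ranks:
  assumes Z: "Z \<subseteq> {..<n}" and i: "i \<in> Z"
  shows "(\<Sum>j\<in>{..<n} - Z. psi i j (y i) (y j))
       = card {s\<in>{1..n} - rank n y ` Z. s \<le> rank n y i}"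
proof -
  have bij: "bij_betw (rank n y) {..<n} {1..n}" by (rule bij_betw_rank)
  have "(\<Sum>j\<in>{..<n} - Z. psi i j (y i) (y j)) = card {j\<in>{..<n} - Z. tie_le y j i}"
    by (simp add: sum_psi_eq_card)
  also have "{j\<in>{..<n} - Z. tie_le y j i} = {j\<in>{..<n} - Z. rank n y j \<le> rank n y i}"
    using Z i rank_le_iff by blast
  also have "card \<dots> = card {s\<in>rank n y ` ({..<n} - Z). s \<le> rank n y i}"
    using bij by (simp add: card_filter_image bij_betw_def inj_on_diff)
  also have "rank n y ` ({..<n} - Z) = {1..n} - rank n y ` Z"
    using bij Z unfolding bij_betw_def by (metis Diff_subset inj_on_image_set_diff)
  finally show ?thesis .
qed

lemma t_R_eq_rank_set_stat:
  assumes Z: "Z \<subseteq> {..<n}"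
  shows "t_R k phi n Z y = rank_set_stat k phi n (rank n y ` Z)"
proof -
  have Z_inter: "Z \<inter> {..<n} = Z" using Z by auto
  have inj: "inj_on (rank n y) Z"
    using bij_betw_rank Z by (auto simp: bij_betw_def intro: inj_on_subset)
  show ?thesis
    by (cases k) (simp_all add: t_R_def rank_set_stat_def Z_inter sum.reindex[OF inj]
        sum_psi_controls_eq_card_ranks[OF Z])
qed

lemma finite_cre: "finite (cre n n1)"
  unfolding cre_def by (rule finite_subset[of _ "Pow {..<n}"]) auto

lemma cre_nonempty: "n1 \<le> n \<Longrightarrow> cre n n1 \<noteq> {}"
  unfolding cre_def by (auto intro!: exI[of _ "{..<n1}"])

lemma set_pmf_cre: "n1 \<le> n \<Longrightarrow> set_pmf (pmf_of_set (cre n n1)) = cre n n1"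
  by (simp add: cre_nonempty finite_cre)

lemma bij_betw_image_cre:
  assumes bij: "bij_betw s {..<n} B"
  shows "bij_betw (image s) (cre n n1) {R. R \<subseteq> B \<and> card R = n1}"
proof -
  have inj: "inj_on s {..<n}" using bij by (rule bij_betw_imp_inj_on)
  have card_image_s: "card (s ` Z) = card Z" if "Z \<subseteq> {..<n}" for Z
    using card_image[OF inj_on_subset[OF inj that]] .
  have "image s ` cre n n1 = {R. R \<subseteq> B \<and> card R = n1}"
  proof (intro equalityI subsetI)
    fix R assume "R \<in> image s ` cre n n1"
    then show "R \<in> {R. R \<subseteq> B \<and> card R = n1}"
      using bij card_image_s unfolding cre_def bij_betw_def by auto
  next
    fix R assume R: "R \<in> {R. R \<subseteq> B \<and> card R = n1}"
    then have "R \<subseteq> s ` {..<n}" using bij unfolding bij_betw_def by simp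
    then obtain Z where "Z \<subseteq> {..<n}" "R = s ` Z" by (auto simp: subset_image_iff)
    then show "R \<in> image s ` cre n n1" using R card_image_s unfolding cre_def by auto
  qed
  moreover have "inj_on (image s) (cre n n1)"
    using inj_on_image_Pow[OF inj] by (rule inj_on_subset) (auto simp: cre_def)
  ultimately show ?thesis unfolding bij_betw_def by simp
qed

lemma treated_ranks_uniform:
  assumes "n1 \<le> n"
  shows "map_pmf (image (rank n y)) (pmf_of_set (cre n n1))
       = pmf_of_set {R. R \<subseteq> {1..n} \<and> card R = n1}"
  using bij_betw_image_cre[OF bij_betw_rank] cre_nonempty[OF assms] finite_cre
  by (rule map_pmf_of_set_bij_betw)

lemma cre_prob_t_R:
  assumes "n1 \<le> n"
  shows "cre_prob n n1 (\<lambda>Z. P (t_R k phi n Z y))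
       = measure_pmf.prob (pmf_of_set {R. R \<subseteq> {1..n} \<and> card R = n1})
           {R. P (rank_set_stat k phi n R)}"
proof -
  let ?p = "pmf_of_set (cre n n1)"
  have "{Z. P (t_R k phi n Z y)} \<inter> set_pmf ?p
      = image (rank n y) -` {R. P (rank_set_stat k phi n R)} \<inter> set_pmf ?p"
    unfolding set_pmf_cre[OF assms] by (auto simp: cre_def t_R_eq_rank_set_stat)
  then have "cre_prob n n1 (\<lambda>Z. P (t_R k phi n Z y))
      = measure_pmf.prob ?p (image (rank n y) -` {R. P (rank_set_stat k phi n R)})"
    unfolding cre_prob_def by (metis measure_Int_set_pmf)
  also have "\<dots> = measure_pmf.prob (map_pmf (image (rank n y)) ?p) {R. P (rank_set_stat k phi n R)}"
    by simp
  finally show ?thesis by (simp only: treated_ranks_uniform[OF assms])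
qed

lemma G_R_eq_cre_prob:
  "n1 \<le> n \<Longrightarrow> G_R k phi n n1 y0 c = cre_prob n n1 (\<lambda>Z. c \<le> t_R k phi n Z y)"
  by (simp add: G_R_def cre_prob_t_R)

lemma card_treated_ranks_above_mono:
  fixes y y' :: "nat \<Rightarrow> ereal"
  assumes Z: "Z \<subseteq> {..<n}"
    and lower: "\<And>i. i < n \<Longrightarrow> y' i \<le> y i"
    and controls: "\<And>j. j < n \<Longrightarrow> j \<notin> Z \<Longrightarrow> y' j = y j"
  shows "card {i\<in>Z. m < rank n y' i} \<le> card {i\<in>Z. m < rank n y i}"
proof -
  have total: "card {i\<in>Z. m < rank n v i} + card {j\<in>{..<n} - Z. m < rank n v j}
      = card {r\<in>{1..n}. m < r}" for v :: "nat \<Rightarrow> ereal"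
  proof -
    have "{i\<in>{..<n}. m < rank n v i} = {i\<in>Z. m < rank n v i} \<union> {j\<in>{..<n} - Z. m < rank n v j}"
      using Z by auto
    then have "card {i\<in>Z. m < rank n v i} + card {j\<in>{..<n} - Z. m < rank n v j}
        = card {i\<in>{..<n}. m < rank n v i}"
      using Z by (simp add: card_Un_disjoint[symmetric] finite_subset disjoint_iff)
    also have "\<dots> = card {r\<in>rank n v ` {..<n}. m < r}"
      using card_filter_image[OF bij_betw_imp_inj_on[OF bij_betw_rank], where P = "\<lambda>r. m < r"] by simp
    also have "rank n v ` {..<n} = {1..n}"
      using bij_betw_rank by (rule bij_betw_imp_surj_on)
    finally show ?thesis .
  qed
  have "rank n y j \<le> rank n y' j" if "j < n" "j \<notin> Z" for j
  proof -
    have "tie_le y' l j" if "l < n" "tie_le y l j" for l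
      using tie_le_lower_left[OF \<open>tie_le y l j\<close> lower controls] \<open>l < n\<close> \<open>j < n\<close> \<open>j \<notin> Z\<close> .
    then show ?thesis unfolding rank_eq_card by (intro card_mono) auto
  qed
  then have "card {j\<in>{..<n} - Z. m < rank n y j} \<le> card {j\<in>{..<n} - Z. m < rank n y' j}"
    by (intro card_mono) (auto intro: less_le_trans)
  then show ?thesis using total[of y] total[of y'] by linarith
qed

lemma t_R_mono_lower_treated:
  fixes y y' :: "nat \<Rightarrow> ereal"
  assumes Z: "Z \<subseteq> {..<n}"
    and lower: "\<And>i. i < n \<Longrightarrow> y' i \<le> y i"
    and controls: "\<And>j. j < n \<Longrightarrow> j \<notin> Z \<Longrightarrow> y' j = y j"
    and "mono phi"
  shows "t_R k phi n Z y' \<le> t_R k phi n Z y"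
proof (cases k)
  case RankSum
  have "finite Z" using Z finite_subset by blast
  with \<open>mono phi\<close> have "(\<Sum>i\<in>Z. phi (rank n y' i)) \<le> (\<Sum>i\<in>Z. phi (rank n y i))"
    by (rule sum_le_sum_of_tail_counts) (rule card_treated_ranks_above_mono[OF Z lower controls])
  then show ?thesis using RankSum Z by (simp add: t_R_def Int_absorb2)
next
  case MannWhitney
  have "(\<Sum>j\<in>{..<n} - Z. psi i j (y' i) (y' j)) \<le> (\<Sum>j\<in>{..<n} - Z. psi i j (y i) (y j))"
    if "i \<in> Z" for i
  proof -
    have "i < n" using that Z by blast
    have "tie_le y j i" if "j < n" "j \<notin> Z" "tie_le y' j i" for j
      using tie_le_raise_right[OF \<open>tie_le y' j i\<close> lower controls] \<open>i < n\<close> that by blast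
    then show ?thesis
      unfolding sum_psi_eq_card[OF finite_Diff[OF finite_lessThan]] by (intro card_mono) auto
  qed
  then show ?thesis
    using MannWhitney Z by (simp add: t_R_def Int_absorb2 sum_mono monoD[OF \<open>mono phi\<close>])
qed

theorem theorem2:
  fixes n n1 :: nat and Y1 Y0 :: "nat \<Rightarrow> real" and M1 M0 :: "nat \<Rightarrow> bool"
    and \<delta> :: "nat \<Rightarrow> real" and b :: real and phi :: "nat \<Rightarrow> real"
    and k :: stat_kind and y0 :: "nat \<Rightarrow> real" and \<alpha> :: real
  assumes "0 < n1" and "n1 < n"
    and "mono phi"
    and H: "\<forall>i<n. Y1 i - Y0 i = \<delta> i"
    and "0 < \<alpha>" and "\<alpha> < 1"
  shows "cre_prob n n1
           (\<lambda>Z. G_R k phi n n1 y0 (t_R k phi n Z (Ytil_g Y1 Y0 M1 M0 \<delta> b Z)) \<le> \<alpha>) \<le> \<alpha>"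
proof -
  have "n1 \<le> n" using \<open>n1 < n\<close> by simp
  let ?p = "pmf_of_set (cre n n1)"
  define w where "w i = (if M0 i then ereal (Y0 i) else ereal b)" for i
  have imputed_below_w: "t_R k phi n Z (Ytil_g Y1 Y0 M1 M0 \<delta> b Z) \<le> t_R k phi n Z w"
    if "Z \<in> set_pmf ?p" for Z
  proof (rule t_R_mono_lower_treated[OF _ _ _ \<open>mono phi\<close>])
    have "Z \<in> cre n n1" using that set_pmf_cre[OF \<open>n1 \<le> n\<close>] by simp
    then show "Z \<subseteq> {..<n}" by (simp add: cre_def)
    show "Ytil_g Y1 Y0 M1 M0 \<delta> b Z i \<le> w i" if "i < n" for i
    proof -
      have "Y1 i - \<delta> i = Y0 i" using H that by force
      then show ?thesis by (simp add: Ytil_g_def w_def)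
    qed
    show "Ytil_g Y1 Y0 M1 M0 \<delta> b Z j = w j" if "j \<notin> Z" for j
      using that by (simp add: Ytil_g_def w_def)
  qed
  have "finite (set_pmf ?p)" by (simp add: set_pmf_cre[OF \<open>n1 \<le> n\<close>] finite_cre)
  from pvalue_of_dominated_statistic_valid[OF this _ imputed_below_w] \<open>0 < \<alpha>\<close>
  have "measure_pmf.prob ?p {Z. measure_pmf.prob ?p
          {Z'. t_R k phi n Z (Ytil_g Y1 Y0 M1 M0 \<delta> b Z) \<le> t_R k phi n Z' w} \<le> \<alpha>} \<le> \<alpha>"
    by simp
  then show ?thesis unfolding G_R_eq_cre_prob[OF \<open>n1 \<le> n\<close>, where y = w] cre_prob_def .
qed

end
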